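(* Consider the equation $$u_t+u_{xxxxx}+B(t)u_{xxx}+uu_{xxx}+E(t)uu_x+F\,u_xu_{xx}+Q(t)u=0 \qquad (2)$$ where $F$ is a nonzero constant and $B,E,Q$ are smooth functions of $t$. Then a vector field $\mathbf v=\tau\partial_t+\xi\partial_x+\eta\partial_u$ generates a Lie point symmetry group of (2) if and only if $$\tau=k_2t+k_3,\qquad \xi=\tfrac{k_2}{5}x+\delta(t),\qquad \eta=\sigma(t)-\tfrac{2k_2}{5}u$$ for constants $k_2,k_3$ and smooth functions $\delta(t),\sigma(t)$ satisfying $$5(k_2t+k_3)B_t+2k_2B+5\sigma=0,\quad (k_2t+k_3)E_t+\tfrac{2k_2}{5}E=0,\quad \sigma E-\delta_t=0,\quad \sigma Q+\sigma_t=0,\quad (k_2t+k_3)Q_t+k_2Q=0 .$$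
   Context: Lie point symmetries are determined by Lie's classical infinitesimal invariance criterion: the fifth prolongation of $\mathbf v$ applied to the left-hand side of (2) must vanish on solutions of (2). *)

theory Defs
  imports "HOL-Analysis.Analysis"
begin

definition partial_dir :: "'a::euclidean_space \<Rightarrow> ('a \<Rightarrow> real) \<Rightarrow> 'a \<Rightarrow> real" where
  "partial_dir v f p = deriv (\<lambda>s. f (p + s *\<^sub>R v)) 0"

fun iter_partials :: "'a::euclidean_space list \<Rightarrow> ('a \<Rightarrow> real) \<Rightarrow> 'a \<Rightarrow> real" where
  "iter_partials [] f = f"
| "iter_partials (v # vs) f = partial_dir v (iter_partials vs f)"

definition smooth_fun :: "('a::euclidean_space \<Rightarrow> real) \<Rightarrow> bool" where
  "smooth_fun f \<longleftrightarrow> (\<forall>vs. set vs \<subseteq> Basis \<longrightarrow> (\<forall>p. iter_partials vs f differentiable (at p)))"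

definition pt :: "(real \<times> real \<Rightarrow> real) \<Rightarrow> real \<times> real \<Rightarrow> real" where
  "pt = partial_dir (1, 0)"

definition px :: "(real \<times> real \<Rightarrow> real) \<Rightarrow> real \<times> real \<Rightarrow> real" where
  "px = partial_dir (0, 1)"

definition pxn :: "nat \<Rightarrow> (real \<times> real \<Rightarrow> real) \<Rightarrow> real \<times> real \<Rightarrow> real" where
  "pxn n = iter_partials (replicate n (0, 1))"

definition along :: "(real \<times> real \<times> real \<Rightarrow> real) \<Rightarrow> (real \<times> real \<Rightarrow> real) \<Rightarrow> real \<times> real \<Rightarrow> real" where
  "along g U p = g (fst p, snd p, U p)"

definition char_fn ::
  "(real \<times> real \<times> real \<Rightarrow> real) \<Rightarrow> (real \<times> real \<times> real \<Rightarrow> real) \<Rightarrow> (real \<times> real \<times> real \<Rightarrow> real)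
   \<Rightarrow> (real \<times> real \<Rightarrow> real) \<Rightarrow> real \<times> real \<Rightarrow> real" where
  "char_fn \<tau> \<xi> \<eta> U = (\<lambda>p. along \<eta> U p - along \<tau> U p * pt U p - along \<xi> U p * px U p)"

text \<open>Prolongation coefficient eta^J = D_J W + tau u_{J,t} + xi u_{J,x}; the multi-index J
  is given as a list of the directions (1,0) (for t) and (0,1) (for x).\<close>
definition prol_coeff ::
  "(real \<times> real \<times> real \<Rightarrow> real) \<Rightarrow> (real \<times> real \<times> real \<Rightarrow> real) \<Rightarrow> (real \<times> real \<times> real \<Rightarrow> real)
   \<Rightarrow> (real \<times> real) list \<Rightarrow> (real \<times> real \<Rightarrow> real) \<Rightarrow> real \<times> real \<Rightarrow> real" where
  "prol_coeff \<tau> \<xi> \<eta> J U p =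
     iter_partials J (char_fn \<tau> \<xi> \<eta> U) p
     + along \<tau> U p * pt (iter_partials J U) p + along \<xi> U p * px (iter_partials J U) p"

definition eq2_lhs ::
  "(real \<Rightarrow> real) \<Rightarrow> (real \<Rightarrow> real) \<Rightarrow> real \<Rightarrow> (real \<Rightarrow> real) \<Rightarrow> (real \<times> real \<Rightarrow> real) \<Rightarrow> real \<times> real \<Rightarrow> real" where
  "eq2_lhs B E F Q U p =
     (let t = fst p in
      pt U p + pxn 5 U p + B t * pxn 3 U p + U p * pxn 3 U p + E t * U p * px U p
      + F * px U p * pxn 2 U p + Q t * U p)"

text \<open>pr^(5) v applied to the left-hand side of (2), evaluated at the 5-jet of u at p:
  tau dDelta/dt + xi dDelta/dx + eta dDelta/du + sum_J eta^J dDelta/du_J.\<close>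
definition eq2_prolonged ::
  "(real \<Rightarrow> real) \<Rightarrow> (real \<Rightarrow> real) \<Rightarrow> real \<Rightarrow> (real \<Rightarrow> real)
   \<Rightarrow> (real \<times> real \<times> real \<Rightarrow> real) \<Rightarrow> (real \<times> real \<times> real \<Rightarrow> real) \<Rightarrow> (real \<times> real \<times> real \<Rightarrow> real)
   \<Rightarrow> (real \<times> real \<Rightarrow> real) \<Rightarrow> real \<times> real \<Rightarrow> real" where
  "eq2_prolonged B E F Q \<tau> \<xi> \<eta> U p =
     (let t = fst p; u = U p; ux = px U p; uxx = pxn 2 U p; uxxx = pxn 3 U p;
          eJ = (\<lambda>J. prol_coeff \<tau> \<xi> \<eta> J U p) in
      along \<tau> U p * (deriv B t * uxxx + deriv E t * u * ux + deriv Q t * u)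
      + along \<xi> U p * 0
      + along \<eta> U p * (uxxx + E t * ux + Q t)
      + eJ [(1, 0)]
      + eJ (replicate 5 (0, 1))
      + (B t + u) * eJ (replicate 3 (0, 1))
      + (E t * u + F * uxx) * eJ [(0, 1)]
      + F * ux * eJ (replicate 2 (0, 1)))"

text \<open>Lie's infinitesimal invariance criterion: pr^(5) v (Delta) vanishes at every 5-jet
  lying on Delta = 0. Every 5-jet is the jet of a smooth (indeed polynomial) u at a point,
  so we quantify over smooth u and points p where Delta[u](p) = 0.\<close>
definition lie_symmetry_eq2 ::
  "(real \<Rightarrow> real) \<Rightarrow> (real \<Rightarrow> real) \<Rightarrow> real \<Rightarrow> (real \<Rightarrow> real)
   \<Rightarrow> (real \<times> real \<times> real \<Rightarrow> real) \<Rightarrow> (real \<times> real \<times> real \<Rightarrow> real) \<Rightarrow> (real \<times> real \<times> real \<Rightarrow> real) \<Rightarrow> bool" where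
  "lie_symmetry_eq2 B E F Q \<tau> \<xi> \<eta> \<longleftrightarrow>
     (\<forall>U. smooth_fun U \<longrightarrow>
        (\<forall>p. eq2_lhs B E F Q U p = 0 \<longrightarrow> eq2_prolonged B E F Q \<tau> \<xi> \<eta> U p = 0))"

end

theory Submission
  imports Defs
begin

text \<open>
  Lie's criterion is tested on the functions \<open>u(t,x) = \<Phi>(x) + (t - t\<^sub>0) \<Psi>(x)\<close> with
  polynomial \<open>\<Phi>, \<Psi>\<close> of degree five. Their jets at \<open>(t\<^sub>0,x\<^sub>0)\<close> are arbitrary in the
  \<open>x\<close>-derivatives, and \<open>\<Psi>(x\<^sub>0)\<close> can always be chosen so that (2) holds at that point.
  Subtracting the prolonged expressions of two such test functions whose jets differ in a
  single coordinate isolates one coefficient of the determining equations at a time: first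
  \<open>\<tau> = \<tau>(t)\<close>, then \<open>\<xi> = \<tau>'/5 \<cdot> x + \<delta>(t)\<close>, then \<open>\<eta>\<close> affine in \<open>u\<close> with slope \<open>-2\<tau>'/5\<close>,
  and finally the ordinary differential conditions, which also force \<open>\<tau>'' = 0\<close>.
  Conversely, for \<open>\<tau>, \<xi>, \<eta>\<close> of this shape, eliminating \<open>u\<^sub>t\<close> by means of (2) turns the
  prolonged expression into a polynomial in the \<open>x\<close>-jet of \<open>u\<close> whose coefficients are
  exactly the stated conditions. Commuting \<open>t\<close>- and \<open>x\<close>-derivatives of smooth functions
  requires the symmetry of second partial derivatives, a consequence of the mean value theorem.
\<close>

abbreviation partial_t :: "(real \<times> real \<times> real \<Rightarrow> real) \<Rightarrow> real \<times> real \<times> real \<Rightarrow> real"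
  where "partial_t \<equiv> partial_dir (1, 0, 0)"

abbreviation partial_x :: "(real \<times> real \<times> real \<Rightarrow> real) \<Rightarrow> real \<times> real \<times> real \<Rightarrow> real"
  where "partial_x \<equiv> partial_dir (0, 1, 0)"

abbreviation partial_u :: "(real \<times> real \<times> real \<Rightarrow> real) \<Rightarrow> real \<times> real \<times> real \<Rightarrow> real"
  where "partial_u \<equiv> partial_dir (0, 0, 1)"

lemma linear_frechet_derivative:
  "f differentiable (at p) \<Longrightarrow> linear (frechet_derivative f (at p))"
  using frechet_derivative_works has_derivative_linear by blast

lemma has_real_derivative_along_line:
  fixes f :: "'a::euclidean_space \<Rightarrow> real"
  assumes "f differentiable (at (a + s *\<^sub>R v))"
  shows "((\<lambda>s. f (a + s *\<^sub>R v)) has_real_derivative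
           frechet_derivative f (at (a + s *\<^sub>R v)) v) (at s)"
proof -
  let ?F = "frechet_derivative f (at (a + s *\<^sub>R v))"
  have "(f has_derivative ?F) (at (a + s *\<^sub>R v))"
    using assms frechet_derivative_works by blast
  moreover have "((\<lambda>s. a + s *\<^sub>R v) has_derivative (\<lambda>h. h *\<^sub>R v)) (at s)"
    by (auto intro!: derivative_eq_intros)
  ultimately have "((\<lambda>s. f (a + s *\<^sub>R v)) has_derivative (\<lambda>h. ?F (h *\<^sub>R v))) (at s)"
    using has_derivative_compose by fastforce
  moreover have "(\<lambda>h. ?F (h *\<^sub>R v)) = (*) (?F v)"
    using linear_cmul[OF linear_frechet_derivative[OF assms]] by (auto simp: mult.commute)
  ultimately show ?thesis
    unfolding has_field_derivative_def by simp
qed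

lemma partial_dir_eq_frechet_derivative:
  fixes f :: "'a::euclidean_space \<Rightarrow> real"
  assumes "f differentiable (at p)"
  shows "partial_dir v f p = frechet_derivative f (at p) v"
  using has_real_derivative_along_line[of f p 0 v] assms unfolding partial_dir_def
  by (simp add: DERIV_imp_deriv)

lemma has_real_derivative_partial_dir:
  fixes f :: "'a::euclidean_space \<Rightarrow> real"
  assumes "f differentiable (at (a + s *\<^sub>R v))"
  shows "((\<lambda>s. f (a + s *\<^sub>R v)) has_real_derivative partial_dir v f (a + s *\<^sub>R v)) (at s)"
  using has_real_derivative_along_line[OF assms] partial_dir_eq_frechet_derivative[OF assms]
  by simp

lemma partial_dir_const [simp]: "partial_dir v (\<lambda>_. c) = (\<lambda>_. 0)"
  unfolding partial_dir_def by auto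

lemma deriv_shift_to_zero: "deriv (\<lambda>s. g (s + z)) 0 = deriv g (z::real)"
  unfolding deriv_def using DERIV_shift[of g _ 0 z] by simp

lemma partial_dir_one_real: "partial_dir (1::real) f = deriv f"
proof
  fix x
  have "partial_dir (1::real) f x = deriv (\<lambda>s. f (s + x)) 0"
    unfolding partial_dir_def by (simp add: add.commute)
  then show "partial_dir (1::real) f x = deriv f x"
    by (simp only: deriv_shift_to_zero)
qed

lemma pt_eq_deriv: "pt f (t, x) = deriv (\<lambda>s. f (s, x)) t"
proof -
  have "pt f (t, x) = deriv (\<lambda>s. (\<lambda>s. f (s, x)) (s + t)) 0"
    unfolding pt_def partial_dir_def by (simp add: add.commute)
  then show ?thesis
    using deriv_shift_to_zero[of "\<lambda>s. f (s, x)" t] by simp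
qed

lemma px_eq_deriv: "px f (t, x) = deriv (\<lambda>y. f (t, y)) x"
proof -
  have "px f (t, x) = deriv (\<lambda>s. (\<lambda>y. f (t, y)) (s + x)) 0"
    unfolding px_def partial_dir_def by (simp add: add.commute)
  then show ?thesis
    using deriv_shift_to_zero[of "\<lambda>y. f (t, y)" x] by simp
qed

lemma pxn_0 [simp]: "pxn 0 f = f"
  unfolding pxn_def by simp

lemma pxn_Suc: "pxn (Suc k) f = px (pxn k f)"
  unfolding pxn_def px_def by simp

lemma pxn_eq_deriv_funpow: "pxn k f (t, x) = (deriv ^^ k) (\<lambda>y. f (t, y)) x"
proof (induction k arbitrary: x)
  case 0
  then show ?case by simp
next
  case (Suc k)
  then have "(\<lambda>y. pxn k f (t, y)) = (deriv ^^ k) (\<lambda>y. f (t, y))"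
    by auto
  then show ?case
    by (simp add: pxn_Suc px_eq_deriv)
qed

lemma iter_partials_append:
  "iter_partials (vs @ ws) f = iter_partials vs (iter_partials ws f)"
  by (induction vs) auto

lemma smooth_fun_differentiable: "smooth_fun f \<Longrightarrow> f differentiable (at p)"
  unfolding smooth_fun_def by (metis empty_subsetI iter_partials.simps(1) list.set(1))

lemma smooth_fun_partial_dir:
  fixes f :: "'a::euclidean_space \<Rightarrow> real"
  assumes "smooth_fun f" and "v \<in> Basis"
  shows "smooth_fun (partial_dir v f)"
  unfolding smooth_fun_def
proof (intro allI impI)
  fix vs :: "'a list" and p
  assume "set vs \<subseteq> Basis"
  moreover have "iter_partials vs (partial_dir v f) = iter_partials (vs @ [v]) f"
    by (simp add: iter_partials_append)
  ultimately show "iter_partials vs (partial_dir v f) differentiable at p"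
    using assms unfolding smooth_fun_def by auto
qed

lemma smooth_fun_const [simp]: "smooth_fun (\<lambda>_. c)"
proof -
  have "\<exists>c'. iter_partials vs (\<lambda>_. c) = (\<lambda>_. c')" for vs :: "'a list"
    by (induction vs) auto
  then show ?thesis
    unfolding smooth_fun_def by (metis differentiable_const)
qed

lemma Basis_real_pair: "((1::real), (0::real)) \<in> Basis" "((0::real), (1::real)) \<in> Basis"
  by (auto simp: Basis_prod_def)

lemma Basis_real_triple:
  "((1::real), (0::real), (0::real)) \<in> Basis" "((0::real), (1::real), (0::real)) \<in> Basis"
  "((0::real), (0::real), (1::real)) \<in> Basis"
  by (auto simp: Basis_prod_def zero_prod_def)

lemma smooth_fun_partial_txu [simp]:
  fixes g :: "real \<times> real \<times> real \<Rightarrow> real"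
  assumes "smooth_fun g"
  shows "smooth_fun (partial_t g)" "smooth_fun (partial_x g)" "smooth_fun (partial_u g)"
  using smooth_fun_partial_dir[OF assms] Basis_real_triple by blast+

lemma smooth_fun_pt: "smooth_fun f \<Longrightarrow> smooth_fun (pt f)"
  unfolding pt_def using smooth_fun_partial_dir Basis_real_pair by blast

lemma smooth_fun_px: "smooth_fun f \<Longrightarrow> smooth_fun (px f)"
  unfolding px_def using smooth_fun_partial_dir Basis_real_pair by blast

lemma smooth_fun_pxn: "smooth_fun f \<Longrightarrow> smooth_fun (pxn k f)"
  by (induction k) (auto simp: pxn_Suc smooth_fun_px)

lemma iter_partials_real:
  "set vs \<subseteq> {1::real} \<Longrightarrow> iter_partials vs f = (deriv ^^ length vs) f"
  by (induction vs) (auto simp: partial_dir_one_real)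

lemma smooth_fun_realI:
  "(\<And>k x. (deriv ^^ k) f differentiable (at x)) \<Longrightarrow> smooth_fun (f :: real \<Rightarrow> real)"
  unfolding smooth_fun_def by (simp add: iter_partials_real)

lemma smooth_fun_deriv [simp]: "smooth_fun (f :: real \<Rightarrow> real) \<Longrightarrow> smooth_fun (deriv f)"
  using smooth_fun_partial_dir[of f 1] by (simp add: partial_dir_one_real)

lemma smooth_fun_cmult:
  fixes f :: "real \<Rightarrow> real"
  assumes f: "smooth_fun f"
  shows "smooth_fun (\<lambda>x. c * f x)"
proof (rule smooth_fun_realI)
  have smooth_derivs: "smooth_fun ((deriv ^^ k) f)" for k
    using f by (induction k) auto
  have "(deriv ^^ k) (\<lambda>x. c * f x) = (\<lambda>x. c * (deriv ^^ k) f x)" for k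
  proof (induction k)
    case 0
    then show ?case by simp
  next
    case (Suc k)
    have "deriv (\<lambda>x. c * (deriv ^^ k) f x) = (\<lambda>x. c * deriv ((deriv ^^ k) f) x)"
      using smooth_derivs[of k]
      by (auto intro!: DERIV_imp_deriv derivative_eq_intros DERIV_deriv_iff_real_differentiable[THEN iffD2]
          smooth_fun_differentiable)
    then show ?case
      using Suc by simp
  qed
  moreover have "(deriv ^^ k) f differentiable (at x)" for k x
    using smooth_derivs smooth_fun_differentiable by blast
  ultimately show "(deriv ^^ k) (\<lambda>x. c * f x) differentiable (at x)" for k x
    by (simp add: differentiable_cmult_left_iff)
qed

definition differentiable_everywhere :: "(real \<Rightarrow> real) \<Rightarrow> bool" where
  "differentiable_everywhere f \<longleftrightarrow> (\<forall>x. f differentiable (at x))"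

lemma differentiable_everywhere_DERIV:
  "differentiable_everywhere f \<Longrightarrow> (f has_real_derivative deriv f x) (at x)"
  unfolding differentiable_everywhere_def using DERIV_deriv_iff_real_differentiable by blast

lemma differentiable_everywhereI:
  "(\<And>x. (f has_real_derivative f' x) (at x)) \<Longrightarrow> differentiable_everywhere f"
  unfolding differentiable_everywhere_def using real_differentiable_def by blast

lemma smooth_fun_imp_differentiable_everywhere [simp]:
  "smooth_fun f \<Longrightarrow> differentiable_everywhere f"
  unfolding differentiable_everywhere_def using smooth_fun_differentiable by blast

lemma differentiable_everywhere_const [simp]: "differentiable_everywhere (\<lambda>x. c)"
  and differentiable_everywhere_ident [simp]: "differentiable_everywhere (\<lambda>x. x)"
  by (auto intro!: differentiable_everywhereI derivative_eq_intros)

lemma differentiable_everywhere_add [simp]: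
    "differentiable_everywhere f \<Longrightarrow> differentiable_everywhere g \<Longrightarrow>
     differentiable_everywhere (\<lambda>x. f x + g x)"
  and differentiable_everywhere_diff [simp]:
    "differentiable_everywhere f \<Longrightarrow> differentiable_everywhere g \<Longrightarrow>
     differentiable_everywhere (\<lambda>x. f x - g x)"
  and differentiable_everywhere_mult [simp]:
    "differentiable_everywhere f \<Longrightarrow> differentiable_everywhere g \<Longrightarrow>
     differentiable_everywhere (\<lambda>x. f x * g x)"
  by (auto intro!: differentiable_everywhereI derivative_eq_intros differentiable_everywhere_DERIV)

lemma deriv_fun_add [simp]:
    "differentiable_everywhere f \<Longrightarrow> differentiable_everywhere g \<Longrightarrow>
     deriv (\<lambda>x. f x + g x) = (\<lambda>x. deriv f x + deriv g x)"
  and deriv_fun_diff [simp]: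
    "differentiable_everywhere f \<Longrightarrow> differentiable_everywhere g \<Longrightarrow>
     deriv (\<lambda>x. f x - g x) = (\<lambda>x. deriv f x - deriv g x)"
  and deriv_fun_mult [simp]:
    "differentiable_everywhere f \<Longrightarrow> differentiable_everywhere g \<Longrightarrow>
     deriv (\<lambda>x. f x * g x) = (\<lambda>x. deriv f x * g x + f x * deriv g x)"
  by (auto intro!: DERIV_imp_deriv derivative_eq_intros differentiable_everywhere_DERIV)

lemma deriv_zero_imp_const:
  "(\<And>t. (f has_real_derivative 0) (at t)) \<Longrightarrow> f t = f (0::real)"
  using DERIV_isconst_all by blast

lemma frechet_derivative_triple:
  fixes g :: "real \<times> real \<times> real \<Rightarrow> real"
  assumes "g differentiable (at q)"
  shows "frechet_derivative g (at q) (a, b, c) =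
     a * partial_t g q + b * partial_x g q + c * partial_u g q"
proof -
  let ?G = "frechet_derivative g (at q)"
  have lin: "linear ?G"
    using linear_frechet_derivative[OF assms] .
  have "(a, b, c) = a *\<^sub>R (1,0,0) + b *\<^sub>R (0,1,0) + c *\<^sub>R ((0::real),(0::real),(1::real))"
    by simp
  then have "?G (a, b, c) = ?G (a *\<^sub>R (1,0,0) + b *\<^sub>R (0,1,0) + c *\<^sub>R (0,0,1))"
    by metis
  also have "\<dots> = a * ?G (1,0,0) + b * ?G (0,1,0) + c * ?G (0,0,1)"
    by (simp only: linear_add[OF lin] linear_cmul[OF lin] real_scaleR_def)
  finally show ?thesis
    using partial_dir_eq_frechet_derivative[OF assms] by simp
qed

lemma has_real_derivative_compose_triple:
  fixes g :: "real \<times> real \<times> real \<Rightarrow> real"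
  assumes g: "g differentiable (at (h1 x, h2 x, h3 x))"
    and "(h1 has_real_derivative d1) (at x)" "(h2 has_real_derivative d2) (at x)"
      "(h3 has_real_derivative d3) (at x)"
  shows "((\<lambda>x. g (h1 x, h2 x, h3 x)) has_real_derivative
     partial_t g (h1 x, h2 x, h3 x) * d1 + partial_x g (h1 x, h2 x, h3 x) * d2
      + partial_u g (h1 x, h2 x, h3 x) * d3) (at x)"
proof -
  let ?G = "frechet_derivative g (at (h1 x, h2 x, h3 x))"
  have "(g has_derivative ?G) (at (h1 x, h2 x, h3 x))"
    using g frechet_derivative_works by blast
  moreover have "((\<lambda>x. (h1 x, h2 x, h3 x)) has_derivative (\<lambda>r. (d1 * r, d2 * r, d3 * r))) (at x)"
    using assms(2-4) unfolding has_field_derivative_def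
    by (intro has_derivative_Pair) auto
  ultimately have "((\<lambda>x. g (h1 x, h2 x, h3 x)) has_derivative
      (\<lambda>r. ?G (d1 * r, d2 * r, d3 * r))) (at x)"
    using has_derivative_compose by fastforce
  moreover have "(\<lambda>r. ?G (d1 * r, d2 * r, d3 * r)) = (*) (?G (d1, d2, d3))"
  proof
    fix r
    have "(d1 * r, d2 * r, d3 * r) = r *\<^sub>R (d1, d2, d3)"
      by (simp add: mult.commute)
    then have "?G (d1 * r, d2 * r, d3 * r) = r * ?G (d1, d2, d3)"
      by (simp only: linear_cmul[OF linear_frechet_derivative[OF g]] real_scaleR_def)
    then show "?G (d1 * r, d2 * r, d3 * r) = ?G (d1, d2, d3) * r"
      by simp
  qed
  ultimately have "((\<lambda>x. g (h1 x, h2 x, h3 x)) has_real_derivative ?G (d1, d2, d3)) (at x)"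
    unfolding has_field_derivative_def by simp
  then show ?thesis
    using frechet_derivative_triple[OF g] by (simp add: mult.commute)
qed

lemma has_real_derivative_triple_t:
  fixes g :: "real \<times> real \<times> real \<Rightarrow> real"
  assumes "smooth_fun g"
  shows "((\<lambda>t. g (t, x, u)) has_real_derivative partial_t g (t, x, u)) (at t)"
proof -
  have "((\<lambda>t. g (t, x, u)) has_real_derivative
      partial_t g (t, x, u) * 1 + partial_x g (t, x, u) * 0 + partial_u g (t, x, u) * 0) (at t)"
    by (rule has_real_derivative_compose_triple)
      (auto intro!: derivative_eq_intros smooth_fun_differentiable[OF assms])
  then show ?thesis
    by simp
qed

lemma has_real_derivative_triple_x:
  fixes g :: "real \<times> real \<times> real \<Rightarrow> real"
  assumes "smooth_fun g"
  shows "((\<lambda>x. g (t, x, u)) has_real_derivative partial_x g (t, x, u)) (at x)"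
proof -
  have "((\<lambda>x. g (t, x, u)) has_real_derivative
      partial_t g (t, x, u) * 0 + partial_x g (t, x, u) * 1 + partial_u g (t, x, u) * 0) (at x)"
    by (rule has_real_derivative_compose_triple)
      (auto intro!: derivative_eq_intros smooth_fun_differentiable[OF assms])
  then show ?thesis
    by simp
qed

lemma has_real_derivative_triple_u:
  fixes g :: "real \<times> real \<times> real \<Rightarrow> real"
  assumes "smooth_fun g"
  shows "((\<lambda>u. g (t, x, u)) has_real_derivative partial_u g (t, x, u)) (at u)"
proof -
  have "((\<lambda>u. g (t, x, u)) has_real_derivative
      partial_t g (t, x, u) * 0 + partial_x g (t, x, u) * 0 + partial_u g (t, x, u) * 1) (at u)"
    by (rule has_real_derivative_compose_triple)
      (auto intro!: derivative_eq_intros smooth_fun_differentiable[OF assms])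
  then show ?thesis
    by simp
qed

lemma smooth_fun_restrict_t:
  fixes g :: "real \<times> real \<times> real \<Rightarrow> real"
  assumes "smooth_fun g"
  shows "smooth_fun (\<lambda>t. g (t, a, b))"
proof (rule smooth_fun_realI)
  have "\<forall>g. smooth_fun g \<longrightarrow> (deriv ^^ k) (\<lambda>t. g (t, a, b)) differentiable (at t)" for k t
  proof (induction k)
    case 0
    then show ?case
      using has_real_derivative_triple_t real_differentiable_def by fastforce
  next
    case (Suc k)
    show ?case
    proof (intro allI impI)
      fix g :: "real \<times> real \<times> real \<Rightarrow> real"
      assume g: "smooth_fun g"
      then have "deriv (\<lambda>t. g (t, a, b)) = (\<lambda>t. partial_t g (t, a, b))"
        using has_real_derivative_triple_t DERIV_imp_deriv by blast
      then have "(deriv ^^ Suc k) (\<lambda>t. g (t, a, b)) = (deriv ^^ k) (\<lambda>t. partial_t g (t, a, b))"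
        by (simp add: funpow_Suc_right del: funpow.simps)
      then show "(deriv ^^ Suc k) (\<lambda>t. g (t, a, b)) differentiable (at t)"
        using Suc g by simp
    qed
  qed
  then show "(deriv ^^ k) (\<lambda>t. g (t, a, b)) differentiable (at t)" for k t
    using assms by blast
qed

text \<open>Keeping the composition folded lets the simplifier differentiate it by \<open>deriv_comp3\<close>.\<close>
definition comp3 ::
  "(real \<times> real \<times> real \<Rightarrow> real) \<Rightarrow> (real \<Rightarrow> real) \<Rightarrow> (real \<Rightarrow> real) \<Rightarrow> (real \<Rightarrow> real)
   \<Rightarrow> real \<Rightarrow> real" where
  "comp3 g h1 h2 h3 = (\<lambda>x. g (h1 x, h2 x, h3 x))"

lemma differentiable_everywhere_comp3 [simp]:
  "smooth_fun g \<Longrightarrow> differentiable_everywhere h1 \<Longrightarrow> differentiable_everywhere h2 \<Longrightarrow>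
   differentiable_everywhere h3 \<Longrightarrow> differentiable_everywhere (comp3 g h1 h2 h3)"
  unfolding comp3_def
  by (rule differentiable_everywhereI, rule has_real_derivative_compose_triple[OF smooth_fun_differentiable])
    (auto intro: differentiable_everywhere_DERIV)

lemma deriv_comp3:
  assumes "smooth_fun g" "differentiable_everywhere h1" "differentiable_everywhere h2"
    "differentiable_everywhere h3"
  shows "deriv (comp3 g h1 h2 h3) = (\<lambda>x. comp3 (partial_t g) h1 h2 h3 x * deriv h1 x
     + comp3 (partial_x g) h1 h2 h3 x * deriv h2 x + comp3 (partial_u g) h1 h2 h3 x * deriv h3 x)"
  unfolding comp3_def
  by (rule ext, rule DERIV_imp_deriv, rule has_real_derivative_compose_triple[OF smooth_fun_differentiable])
    (use assms differentiable_everywhere_DERIV in auto)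

lemma affine_in_x_if_partials:
  fixes g :: "real \<times> real \<times> real \<Rightarrow> real"
  assumes g: "smooth_fun g"
    and gx: "\<And>t x u. partial_x g (t, x, u) = a t" and gu: "\<And>t x u. partial_u g (t, x, u) = 0"
  shows "g (t, x, u) = a t * x + g (t, 0, 0)"
proof -
  have "((\<lambda>x. g (t, x, u) - a t * x) has_real_derivative 0) (at x)" for x
    using DERIV_diff[OF has_real_derivative_triple_x[OF g, where t = t and x = x and u = u]
      DERIV_cmult_Id[of "a t"]] gx[of t x u]
    by simp
  then have "g (t, x, u) - a t * x = g (t, 0, u)"
    using deriv_zero_imp_const[of "\<lambda>x. g (t, x, u) - a t * x"] by simp
  moreover have "g (t, 0, u) = g (t, 0, 0)"
    using deriv_zero_imp_const[of "\<lambda>u. g (t, 0, u)"] has_real_derivative_triple_u[OF g] gu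
    by simp
  ultimately show ?thesis
    by simp
qed

section \<open>Test functions\<close>

definition affine_in_t :: "real \<Rightarrow> (real \<Rightarrow> real) \<Rightarrow> (real \<Rightarrow> real) \<Rightarrow> real \<times> real \<Rightarrow> real" where
  "affine_in_t t0 \<Phi> \<Psi> = (\<lambda>(t, x). \<Phi> x + (t - t0) * \<Psi> x)"

lemma affine_in_t_apply [simp]: "affine_in_t t0 \<Phi> \<Psi> (t, x) = \<Phi> x + (t - t0) * \<Psi> x"
  unfolding affine_in_t_def by simp

lemma pt_affine_in_t: "pt (affine_in_t t0 \<Phi> \<Psi>) = affine_in_t t0 \<Psi> (\<lambda>_. 0)"
proof
  fix q :: "real \<times> real"
  obtain t x where q: "q = (t, x)"
    by fastforce
  have "((\<lambda>s. \<Phi> x + (s - t0) * \<Psi> x) has_real_derivative \<Psi> x) (at t)"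
    by (auto intro!: derivative_eq_intros)
  then show "pt (affine_in_t t0 \<Phi> \<Psi>) q = affine_in_t t0 \<Psi> (\<lambda>_. 0) q"
    unfolding q pt_eq_deriv affine_in_t_def by (simp add: DERIV_imp_deriv)
qed

lemma px_affine_in_t:
  assumes "differentiable_everywhere \<Phi>" "differentiable_everywhere \<Psi>"
  shows "px (affine_in_t t0 \<Phi> \<Psi>) = affine_in_t t0 (deriv \<Phi>) (deriv \<Psi>)"
proof
  fix q :: "real \<times> real"
  obtain t x where q: "q = (t, x)"
    by fastforce
  have "((\<lambda>y. \<Phi> y + (t - t0) * \<Psi> y) has_real_derivative deriv \<Phi> x + (t - t0) * deriv \<Psi> x) (at x)"
    using assms by (auto intro!: derivative_eq_intros differentiable_everywhere_DERIV)
  then show "px (affine_in_t t0 \<Phi> \<Psi>) q = affine_in_t t0 (deriv \<Phi>) (deriv \<Psi>) q"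
    unfolding q px_eq_deriv affine_in_t_def by (simp add: DERIV_imp_deriv)
qed

lemma pxn_affine_in_t:
  "smooth_fun \<Phi> \<Longrightarrow> smooth_fun \<Psi> \<Longrightarrow>
   pxn k (affine_in_t t0 \<Phi> \<Psi>) = affine_in_t t0 ((deriv ^^ k) \<Phi>) ((deriv ^^ k) \<Psi>)"
proof (induction k arbitrary: \<Phi> \<Psi>)
  case 0
  then show ?case by simp
next
  case (Suc k)
  have "pxn (Suc k) (affine_in_t t0 \<Phi> \<Psi>) = pxn k (px (affine_in_t t0 \<Phi> \<Psi>))"
    unfolding pxn_def px_def
    by (simp add: replicate_append_same[symmetric] iter_partials_append del: replicate_append_same)
  also have "\<dots> = pxn k (affine_in_t t0 (deriv \<Phi>) (deriv \<Psi>))"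
    using Suc.prems by (simp add: px_affine_in_t)
  also have "\<dots> = affine_in_t t0 ((deriv ^^ k) (deriv \<Phi>)) ((deriv ^^ k) (deriv \<Psi>))"
    using Suc by simp
  finally show ?case
    by (simp add: funpow_Suc_right del: funpow.simps)
qed

lemma affine_in_t_differentiable:
  assumes "differentiable_everywhere \<Phi>" "differentiable_everywhere \<Psi>"
  shows "affine_in_t t0 \<Phi> \<Psi> differentiable (at p)"
proof -
  have snd: "(\<lambda>q. f (snd q)) differentiable (at (p :: real \<times> real))"
    if "differentiable_everywhere f" for f
    using that unfolding differentiable_everywhere_def
    by (intro differentiable_compose[where g = snd and f = f])
      (auto intro: bounded_linear_imp_differentiable bounded_linear_snd)
  have "(\<lambda>q. fst q - t0) differentiable (at (p :: real \<times> real))"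
    by (intro differentiable_diff) (auto intro: bounded_linear_imp_differentiable bounded_linear_fst)
  then have "(\<lambda>q. \<Phi> (snd q) + (fst q - t0) * \<Psi> (snd q)) differentiable (at p)"
    using assms by (intro differentiable_add differentiable_mult snd)
  then show ?thesis
    unfolding affine_in_t_def by (simp add: case_prod_beta')
qed

lemma iter_partials_affine_in_t:
  assumes "set vs \<subseteq> Basis" "smooth_fun \<Phi>" "smooth_fun \<Psi>"
  shows "\<exists>\<Phi>' \<Psi>'. smooth_fun \<Phi>' \<and> smooth_fun \<Psi>' \<and>
    iter_partials vs (affine_in_t t0 \<Phi> \<Psi>) = affine_in_t t0 \<Phi>' \<Psi>'"
  using assms(1)
proof (induction vs)
  case Nil
  then show ?case using assms(2,3) by auto
next
  case (Cons v vs)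
  then obtain \<Phi>' \<Psi>' where IH: "smooth_fun \<Phi>'" "smooth_fun \<Psi>'"
      "iter_partials vs (affine_in_t t0 \<Phi> \<Psi>) = affine_in_t t0 \<Phi>' \<Psi>'"
    by auto
  have "v = (1, 0) \<or> v = (0, 1)"
    using Cons.prems by (auto simp: Basis_prod_def)
  then show ?case
  proof
    assume "v = (1, 0)"
    then have "iter_partials (v # vs) (affine_in_t t0 \<Phi> \<Psi>) = affine_in_t t0 \<Psi>' (\<lambda>_. 0)"
      using IH(3) pt_affine_in_t unfolding pt_def by simp
    then show ?case
      using IH(2) smooth_fun_const by blast
  next
    assume "v = (0, 1)"
    moreover have "px (affine_in_t t0 \<Phi>' \<Psi>') = affine_in_t t0 (deriv \<Phi>') (deriv \<Psi>')"
      using IH(1,2) by (simp add: px_affine_in_t)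
    ultimately have "iter_partials (v # vs) (affine_in_t t0 \<Phi> \<Psi>) =
        affine_in_t t0 (deriv \<Phi>') (deriv \<Psi>')"
      using IH(3) unfolding px_def by simp
    then show ?case
      using IH(1,2) smooth_fun_deriv by blast
  qed
qed

lemma smooth_fun_affine_in_t:
  assumes "smooth_fun \<Phi>" "smooth_fun \<Psi>"
  shows "smooth_fun (affine_in_t t0 \<Phi> \<Psi>)"
  unfolding smooth_fun_def
proof (intro allI impI)
  fix vs :: "(real \<times> real) list" and p
  assume "set vs \<subseteq> Basis"
  then obtain \<Phi>' \<Psi>' where "smooth_fun \<Phi>'" "smooth_fun \<Psi>'"
    "iter_partials vs (affine_in_t t0 \<Phi> \<Psi>) = affine_in_t t0 \<Phi>' \<Psi>'"
    using iter_partials_affine_in_t assms by blast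
  then show "iter_partials vs (affine_in_t t0 \<Phi> \<Psi>) differentiable (at p)"
    by (simp add: affine_in_t_differentiable)
qed

definition quintic :: "real \<Rightarrow> real \<Rightarrow> real \<Rightarrow> real \<Rightarrow> real \<Rightarrow> real \<Rightarrow> real \<Rightarrow> real \<Rightarrow> real" where
  "quintic x0 a0 a1 a2 a3 a4 a5 = (\<lambda>x. a0 + a1 * (x - x0) + a2 * (x - x0)^2 + a3 * (x - x0)^3
      + a4 * (x - x0)^4 + a5 * (x - x0)^5)"

lemma quintic_at_centre [simp]: "quintic x0 a0 a1 a2 a3 a4 a5 x0 = a0"
  unfolding quintic_def by simp

lemma deriv_quintic [simp]:
  "deriv (quintic x0 a0 a1 a2 a3 a4 a5) = quintic x0 a1 (2 * a2) (3 * a3) (4 * a4) (5 * a5) 0"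
proof
  fix x
  show "deriv (quintic x0 a0 a1 a2 a3 a4 a5) x = quintic x0 a1 (2 * a2) (3 * a3) (4 * a4) (5 * a5) 0 x"
    unfolding quintic_def
    by (rule DERIV_imp_deriv)
      (auto intro!: derivative_eq_intros simp: algebra_simps power2_eq_square power3_eq_cube)
qed

lemma smooth_fun_quintic [simp]: "smooth_fun (quintic x0 a0 a1 a2 a3 a4 a5)"
proof (rule smooth_fun_realI)
  fix k x
  have "\<exists>b0 b1 b2 b3 b4 b5. (deriv ^^ k) (quintic x0 a0 a1 a2 a3 a4 a5) = quintic x0 b0 b1 b2 b3 b4 b5"
  proof (induction k)
    case 0
    show ?case
      by (intro exI) simp
  next
    case (Suc k)
    then obtain b0 b1 b2 b3 b4 b5 where
      "(deriv ^^ k) (quintic x0 a0 a1 a2 a3 a4 a5) = quintic x0 b0 b1 b2 b3 b4 b5"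
      by blast
    then have "(deriv ^^ Suc k) (quintic x0 a0 a1 a2 a3 a4 a5) =
        quintic x0 b1 (2 * b2) (3 * b3) (4 * b4) (5 * b5) 0"
      by simp
    then show ?case
      by blast
  qed
  moreover have "quintic x0 b0 b1 b2 b3 b4 b5 differentiable (at x)" for b0 b1 b2 b3 b4 b5
    unfolding quintic_def by (auto intro!: derivative_intros)
  ultimately show "(deriv ^^ k) (quintic x0 a0 a1 a2 a3 a4 a5) differentiable (at x)"
    by metis
qed

section \<open>Symmetry of second partial derivatives\<close>

lemma second_difference_mean_value:
  fixes f :: "'a::euclidean_space \<Rightarrow> real"
  assumes df: "\<And>q. f differentiable (at q)" and dv: "\<And>q. partial_dir v f differentiable (at q)"
    and h: "h > 0"
  shows "\<exists>s r. 0 < s \<and> s < h \<and> 0 < r \<and> r < h \<and>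
     f (p + h *\<^sub>R w + h *\<^sub>R v) - f (p + h *\<^sub>R v) - f (p + h *\<^sub>R w) + f p
       = h * h * partial_dir w (partial_dir v f) (p + s *\<^sub>R v + r *\<^sub>R w)"
proof -
  let ?g = "\<lambda>s. f (p + h *\<^sub>R w + s *\<^sub>R v) - f (p + s *\<^sub>R v)"
  let ?G = "\<lambda>s. partial_dir v f (p + h *\<^sub>R w + s *\<^sub>R v) - partial_dir v f (p + s *\<^sub>R v)"
  have "(?g has_real_derivative ?G s) (at s)" for s
    by (intro DERIV_diff has_real_derivative_partial_dir df)
  then obtain s where s: "0 < s" "s < h" "?g h - ?g 0 = h * ?G s"
    using MVT2[of 0 h ?g ?G] h by auto
  let ?k = "\<lambda>r. partial_dir v f ((p + s *\<^sub>R v) + r *\<^sub>R w)"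
  let ?K = "\<lambda>r. partial_dir w (partial_dir v f) ((p + s *\<^sub>R v) + r *\<^sub>R w)"
  have "(?k has_real_derivative ?K r) (at r)" for r
    by (intro has_real_derivative_partial_dir dv)
  then obtain r where r: "0 < r" "r < h" "?k h - ?k 0 = h * ?K r"
    using MVT2[of 0 h ?k ?K] h by auto
  have shift: "p + h *\<^sub>R w + s *\<^sub>R v = (p + s *\<^sub>R v) + h *\<^sub>R w"
    by (simp add: algebra_simps)
  have "f (p + h *\<^sub>R w + h *\<^sub>R v) - f (p + h *\<^sub>R v) - f (p + h *\<^sub>R w) + f p = ?g h - ?g 0"
    by simp
  also have "\<dots> = h * (?k h - ?k 0)"
    using s(3) by (simp add: shift)
  also have "\<dots> = h * h * ?K r"
    using r(3) by simp
  finally show ?thesis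
    using s r by blast
qed

lemma dist_add_scaleR_le:
  fixes p v w :: "'a::real_normed_vector"
  assumes "0 < s" "s < h" "0 < r" "r < h"
  shows "dist (p + s *\<^sub>R v + r *\<^sub>R w) p \<le> (norm v + norm w) * h"
proof -
  have "dist (p + s *\<^sub>R v + r *\<^sub>R w) p = norm (s *\<^sub>R v + r *\<^sub>R w)"
    by (simp add: dist_norm)
  also have "\<dots> \<le> norm (s *\<^sub>R v) + norm (r *\<^sub>R w)"
    by (rule norm_triangle_ineq)
  also have "\<dots> \<le> h * norm v + h * norm w"
    using assms by (auto intro!: add_mono mult_right_mono)
  finally show ?thesis
    by (simp add: algebra_simps)
qed

lemma mixed_partials_agree_nearby:
  fixes f :: "'a::euclidean_space \<Rightarrow> real"
  assumes df: "\<And>q. f differentiable (at q)" and dv: "\<And>q. partial_dir v f differentiable (at q)"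
    and dw: "\<And>q. partial_dir w f differentiable (at q)" and h: "h > 0"
  shows "\<exists>P1 P2. dist P1 p \<le> (norm v + norm w) * h \<and> dist P2 p \<le> (norm v + norm w) * h \<and>
    partial_dir w (partial_dir v f) P1 = partial_dir v (partial_dir w f) P2"
proof -
  let ?A = "partial_dir w (partial_dir v f)" and ?B = "partial_dir v (partial_dir w f)"
  obtain s r where sr: "0 < s" "s < h" "0 < r" "r < h"
    "f (p + h *\<^sub>R w + h *\<^sub>R v) - f (p + h *\<^sub>R v) - f (p + h *\<^sub>R w) + f p
       = h * h * ?A (p + s *\<^sub>R v + r *\<^sub>R w)"
    using second_difference_mean_value[OF df dv h] by blast
  obtain s' r' where sr': "0 < s'" "s' < h" "0 < r'" "r' < h"
    "f (p + h *\<^sub>R v + h *\<^sub>R w) - f (p + h *\<^sub>R w) - f (p + h *\<^sub>R v) + f p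
       = h * h * ?B (p + s' *\<^sub>R w + r' *\<^sub>R v)"
    using second_difference_mean_value[OF df dw h, of p v] by blast
  have swap: "p + h *\<^sub>R v + h *\<^sub>R w = p + h *\<^sub>R w + h *\<^sub>R v"
    by (simp add: algebra_simps)
  have "h * h * ?A (p + s *\<^sub>R v + r *\<^sub>R w) = h * h * ?B (p + s' *\<^sub>R w + r' *\<^sub>R v)"
    using sr(5) sr'(5)[unfolded swap] by linarith
  then have "?A (p + s *\<^sub>R v + r *\<^sub>R w) = ?B (p + s' *\<^sub>R w + r' *\<^sub>R v)"
    using h by simp
  moreover have "dist (p + s *\<^sub>R v + r *\<^sub>R w) p \<le> (norm v + norm w) * h"
    using dist_add_scaleR_le[OF sr(1-4)] .
  moreover have "dist (p + s' *\<^sub>R w + r' *\<^sub>R v) p \<le> (norm v + norm w) * h"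
    using dist_add_scaleR_le[OF sr'(1-4), of p w v] by (simp add: add.commute)
  ultimately show ?thesis
    by blast
qed

lemma partial_dir_commute_at:
  fixes f :: "'a::euclidean_space \<Rightarrow> real"
  assumes df: "\<And>q. f differentiable (at q)" and dv: "\<And>q. partial_dir v f differentiable (at q)"
    and dw: "\<And>q. partial_dir w f differentiable (at q)"
    and cA: "isCont (partial_dir w (partial_dir v f)) p"
    and cB: "isCont (partial_dir v (partial_dir w f)) p"
  shows "partial_dir w (partial_dir v f) p = partial_dir v (partial_dir w f) p"
proof -
  let ?A = "partial_dir w (partial_dir v f)" and ?B = "partial_dir v (partial_dir w f)"
  let ?M = "norm v + norm w"
  have "dist (?A p) (?B p) < e" if e: "e > 0" for e
  proof -
    obtain d1 where d1: "d1 > 0" "\<And>q. dist q p < d1 \<Longrightarrow> dist (?A q) (?A p) < e / 2"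
      using cA e unfolding continuous_at_eps_delta by (metis half_gt_zero)
    obtain d2 where d2: "d2 > 0" "\<And>q. dist q p < d2 \<Longrightarrow> dist (?B q) (?B p) < e / 2"
      using cB e unfolding continuous_at_eps_delta by (metis half_gt_zero)
    define h where "h = min d1 d2 / (?M + 1)"
    have M: "?M + 1 > 0"
      using norm_ge_zero[of v] norm_ge_zero[of w] by linarith
    have "h > 0"
      using d1 d2 M unfolding h_def by simp
    moreover have "?M * h < min d1 d2"
    proof -
      have "?M * h < (?M + 1) * h"
        using \<open>h > 0\<close> by simp
      also have "\<dots> = min d1 d2"
        using M unfolding h_def by simp
      finally show ?thesis .
    qed
    ultimately obtain P1 P2 where "dist P1 p < d1" "dist P2 p < d2" "?A P1 = ?B P2"
      using mixed_partials_agree_nearby[OF df dv dw, where p = p] by force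
    then have "dist (?A p) (?B p) < e / 2 + e / 2"
      using d1(2) d2(2) dist_triangle[of "?A p" "?B p" "?A P1"]
      by (smt (verit) dist_commute)
    then show ?thesis
      by simp
  qed
  then show ?thesis
    by (metis less_irrefl zero_less_dist_iff)
qed

lemma smooth_fun_partial_dir_commute:
  fixes f :: "'a::euclidean_space \<Rightarrow> real"
  assumes f: "smooth_fun f" and v: "v \<in> Basis" and w: "w \<in> Basis"
  shows "partial_dir w (partial_dir v f) = partial_dir v (partial_dir w f)"
proof
  fix p
  have sv: "smooth_fun (partial_dir v f)" and sw: "smooth_fun (partial_dir w f)"
    using f v w smooth_fun_partial_dir by auto
  have "isCont (partial_dir w (partial_dir v f)) p" "isCont (partial_dir v (partial_dir w f)) p"
    using smooth_fun_partial_dir[OF sv w] smooth_fun_partial_dir[OF sw v]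
    by (auto intro: differentiable_imp_continuous_within smooth_fun_differentiable)
  then show "partial_dir w (partial_dir v f) p = partial_dir v (partial_dir w f) p"
    using f sv sw by (intro partial_dir_commute_at smooth_fun_differentiable)
qed

lemma pt_px_commute: "smooth_fun f \<Longrightarrow> pt (px f) = px (pt f)"
  unfolding pt_def px_def using smooth_fun_partial_dir_commute Basis_real_pair by blast

lemma pt_pxn_commute: "smooth_fun f \<Longrightarrow> pt (pxn k f) = pxn k (pt f)"
proof (induction k)
  case 0
  then show ?case by simp
next
  case (Suc k)
  have "pt (pxn (Suc k) f) = px (pt (pxn k f))"
    using pt_px_commute smooth_fun_pxn Suc.prems by (simp add: pxn_Suc)
  also have "\<dots> = pxn (Suc k) (pt f)"
    using Suc by (simp add: pxn_Suc)
  finally show ?case .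
qed

lemma partial_u_partial_x_commute:
    "smooth_fun g \<Longrightarrow> partial_u (partial_x g) = partial_x (partial_u g)"
  and partial_u_partial_t_commute:
    "smooth_fun g \<Longrightarrow> partial_u (partial_t g) = partial_t (partial_u g)"
  and partial_x_partial_t_commute:
    "smooth_fun g \<Longrightarrow> partial_x (partial_t g) = partial_t (partial_x g)"
  for g :: "real \<times> real \<times> real \<Rightarrow> real"
  using smooth_fun_partial_dir_commute Basis_real_triple by blast+

lemma funpow_deriv_numeral:
  "(deriv ^^ 1) f = deriv f" "(deriv ^^ 2) f = deriv (deriv f)"
  "(deriv ^^ 3) f = deriv (deriv (deriv f))" "(deriv ^^ 4) f = deriv (deriv (deriv (deriv f)))"
  "(deriv ^^ 5) f = deriv (deriv (deriv (deriv (deriv f))))"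
  "(deriv ^^ 6) f = deriv (deriv (deriv (deriv (deriv (deriv f)))))"
  by (simp_all add: numeral_eq_Suc)

text \<open>
  The coefficients \<open>\<eta>\<^sup>J\<close> with \<open>J = x\<dots>x\<close> only involve the restriction of \<open>u\<close> to the line
  \<open>t = t\<^sub>0\<close> and that of \<open>u\<^sub>t\<close>, since \<open>D\<^sub>x\<^sup>k u\<^sub>t = D\<^sub>t D\<^sub>x\<^sup>k u\<close> by symmetry of partials; \<open>\<eta>\<^sup>t\<close>
  only involves the restrictions to the line \<open>x = x\<^sub>0\<close>.
\<close>
lemma eq2_prolonged_expand:
  assumes U: "smooth_fun U"
  shows "eq2_prolonged B E F Q \<tau> \<xi> \<eta> U (t0, x0) =
    (let \<Phi> = (\<lambda>y. U (t0, y)); \<Psi> = (\<lambda>y. pt U (t0, y));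
         q = (t0, x0, \<Phi> x0); u0 = \<Phi> x0; u1 = deriv \<Phi> x0; u2 = deriv (deriv \<Phi>) x0;
         u3 = deriv (deriv (deriv \<Phi>)) x0;
         W = (\<lambda>y. comp3 \<eta> (\<lambda>_. t0) (\<lambda>y. y) \<Phi> y - comp3 \<tau> (\<lambda>_. t0) (\<lambda>y. y) \<Phi> y * \<Psi> y
                     - comp3 \<xi> (\<lambda>_. t0) (\<lambda>y. y) \<Phi> y * deriv \<Phi> y);
         Ut = (\<lambda>s. U (s, x0)); Pt = (\<lambda>s. pt U (s, x0)); Xt = (\<lambda>s. px U (s, x0));
         Wt = (\<lambda>s. comp3 \<eta> (\<lambda>s. s) (\<lambda>_. x0) Ut s - comp3 \<tau> (\<lambda>s. s) (\<lambda>_. x0) Ut s * Pt s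
                     - comp3 \<xi> (\<lambda>s. s) (\<lambda>_. x0) Ut s * Xt s)
     in \<tau> q * (deriv B t0 * u3 + deriv E t0 * u0 * u1 + deriv Q t0 * u0)
      + \<eta> q * (u3 + E t0 * u1 + Q t0)
      + (deriv Wt t0 + \<tau> q * pt (pt U) (t0, x0) + \<xi> q * deriv \<Psi> x0)
      + (deriv (deriv (deriv (deriv (deriv W)))) x0
          + \<tau> q * deriv (deriv (deriv (deriv (deriv \<Psi>)))) x0
          + \<xi> q * deriv (deriv (deriv (deriv (deriv (deriv \<Phi>))))) x0)
      + (B t0 + u0) * (deriv (deriv (deriv W)) x0 + \<tau> q * deriv (deriv (deriv \<Psi>)) x0
          + \<xi> q * deriv (deriv (deriv (deriv \<Phi>))) x0)
      + (E t0 * u0 + F * u2) * (deriv W x0 + \<tau> q * deriv \<Psi> x0 + \<xi> q * u2)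
      + F * u1 * (deriv (deriv W) x0 + \<tau> q * deriv (deriv \<Psi>) x0 + \<xi> q * u3))"
proof -
  have W: "(\<lambda>y. char_fn \<tau> \<xi> \<eta> U (t0, y)) =
      (\<lambda>y. comp3 \<eta> (\<lambda>_. t0) (\<lambda>y. y) (\<lambda>y. U (t0, y)) y
       - comp3 \<tau> (\<lambda>_. t0) (\<lambda>y. y) (\<lambda>y. U (t0, y)) y * pt U (t0, y)
       - comp3 \<xi> (\<lambda>_. t0) (\<lambda>y. y) (\<lambda>y. U (t0, y)) y * deriv (\<lambda>y. U (t0, y)) y)"
    unfolding char_fn_def along_def comp3_def by (simp add: px_eq_deriv)
  have Wt: "(\<lambda>s. char_fn \<tau> \<xi> \<eta> U (s, x0)) =
      (\<lambda>s. comp3 \<eta> (\<lambda>s. s) (\<lambda>_. x0) (\<lambda>s. U (s, x0)) s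
       - comp3 \<tau> (\<lambda>s. s) (\<lambda>_. x0) (\<lambda>s. U (s, x0)) s * pt U (s, x0)
       - comp3 \<xi> (\<lambda>s. s) (\<lambda>_. x0) (\<lambda>s. U (s, x0)) s * px U (s, x0))"
    unfolding char_fn_def along_def comp3_def by simp
  have pxn: "iter_partials (replicate k (0, 1)) f = pxn k f" for k f
    by (simp add: pxn_def)
  have rep: "[(0::real, 1::real)] = replicate 1 (0, 1)"
    by simp
  have single: "iter_partials [v] f = partial_dir v f" for v f
    by simp
  have pxn1: "pxn 1 f = px f" for f
    by (simp add: pxn_Suc)
  show ?thesis
    unfolding eq2_prolonged_def prol_coeff_def Let_def pxn rep single
    apply (simp only: pt_def[symmetric] px_def[symmetric] pt_pxn_commute[OF U] pxn_Suc[symmetric])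
    apply (simp only: pxn_eq_deriv_funpow pt_eq_deriv W Wt)
    apply (simp add: along_def funpow_deriv_numeral px_eq_deriv pxn1 pt_eq_deriv)
    done
qed

lemma eq2_lhs_affine_in_t:
  assumes "smooth_fun \<Phi>" "smooth_fun \<Psi>"
  shows "eq2_lhs B E F Q (affine_in_t t0 \<Phi> \<Psi>) (t0, x0) =
     \<Psi> x0 + deriv (deriv (deriv (deriv (deriv \<Phi>)))) x0 + B t0 * deriv (deriv (deriv \<Phi>)) x0
     + \<Phi> x0 * deriv (deriv (deriv \<Phi>)) x0 + E t0 * \<Phi> x0 * deriv \<Phi> x0
     + F * deriv \<Phi> x0 * deriv (deriv \<Phi>) x0 + Q t0 * \<Phi> x0"
  using assms
  unfolding eq2_lhs_def Let_def pxn_affine_in_t[OF assms] pt_affine_in_t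
  by (simp add: funpow_deriv_numeral px_affine_in_t)

lemma lie_symmetry_eq2_at_affine_in_t:
  assumes "lie_symmetry_eq2 B E F Q \<tau> \<xi> \<eta>" "smooth_fun \<Phi>" "smooth_fun \<Psi>"
    "eq2_lhs B E F Q (affine_in_t t0 \<Phi> \<Psi>) (t0, x0) = 0"
  shows "eq2_prolonged B E F Q \<tau> \<xi> \<eta> (affine_in_t t0 \<Phi> \<Psi>) (t0, x0) = 0"
  using assms smooth_fun_affine_in_t unfolding lie_symmetry_eq2_def by blast

lemma eq2_prolonged_affine_in_t:
  assumes "smooth_fun \<Phi>" "smooth_fun \<Psi>"
  shows "eq2_prolonged B E F Q \<tau> \<xi> \<eta> (affine_in_t t0 \<Phi> \<Psi>) (t0, x0) =
    (let q = (t0, x0, \<Phi> x0); u0 = \<Phi> x0; u1 = deriv \<Phi> x0; u2 = deriv (deriv \<Phi>) x0;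
         u3 = deriv (deriv (deriv \<Phi>)) x0;
         W = (\<lambda>y. comp3 \<eta> (\<lambda>_. t0) (\<lambda>y. y) \<Phi> y - comp3 \<tau> (\<lambda>_. t0) (\<lambda>y. y) \<Phi> y * \<Psi> y
                     - comp3 \<xi> (\<lambda>_. t0) (\<lambda>y. y) \<Phi> y * deriv \<Phi> y);
         Ut = (\<lambda>s. \<Phi> x0 + (s - t0) * \<Psi> x0);
         Wt = (\<lambda>s. comp3 \<eta> (\<lambda>s. s) (\<lambda>_. x0) Ut s - comp3 \<tau> (\<lambda>s. s) (\<lambda>_. x0) Ut s * \<Psi> x0
                     - comp3 \<xi> (\<lambda>s. s) (\<lambda>_. x0) Ut s * (u1 + (s - t0) * deriv \<Psi> x0))
     in \<tau> q * (deriv B t0 * u3 + deriv E t0 * u0 * u1 + deriv Q t0 * u0)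
      + \<eta> q * (u3 + E t0 * u1 + Q t0)
      + (deriv Wt t0 + \<xi> q * deriv \<Psi> x0)
      + (deriv (deriv (deriv (deriv (deriv W)))) x0
          + \<tau> q * deriv (deriv (deriv (deriv (deriv \<Psi>)))) x0
          + \<xi> q * deriv (deriv (deriv (deriv (deriv (deriv \<Phi>))))) x0)
      + (B t0 + u0) * (deriv (deriv (deriv W)) x0 + \<tau> q * deriv (deriv (deriv \<Psi>)) x0
          + \<xi> q * deriv (deriv (deriv (deriv \<Phi>))) x0)
      + (E t0 * u0 + F * u2) * (deriv W x0 + \<tau> q * deriv \<Psi> x0 + \<xi> q * u2)
      + F * u1 * (deriv (deriv W) x0 + \<tau> q * deriv (deriv \<Psi>) x0 + \<xi> q * u3))"
  using assms
  by (simp add: eq2_prolonged_expand smooth_fun_affine_in_t pt_affine_in_t px_affine_in_t Let_def)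

section \<open>Determining equations\<close>

definition fun_of_t :: "(real \<Rightarrow> real) \<Rightarrow> real \<times> real \<times> real \<Rightarrow> real" where
  "fun_of_t T = (\<lambda>(t, x, u). T t)"

definition affine_in_x :: "(real \<Rightarrow> real) \<Rightarrow> (real \<Rightarrow> real) \<Rightarrow> real \<times> real \<times> real \<Rightarrow> real" where
  "affine_in_x A D = (\<lambda>(t, x, u). A t * x + D t)"

definition affine_in_u :: "(real \<Rightarrow> real) \<Rightarrow> (real \<Rightarrow> real) \<Rightarrow> real \<times> real \<times> real \<Rightarrow> real" where
  "affine_in_u S Al = (\<lambda>(t, x, u). S t + Al t * u)"

lemma fun_of_t_apply [simp]: "fun_of_t T (t, x, u) = T t"
  and affine_in_x_apply [simp]: "affine_in_x A D (t, x, u) = A t * x + D t"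
  and affine_in_u_apply [simp]: "affine_in_u S Al (t, x, u) = S t + Al t * u"
  by (simp_all add: fun_of_t_def affine_in_x_def affine_in_u_def)

lemma comp3_fun_of_t [simp]: "comp3 (fun_of_t T) h1 h2 h3 = (\<lambda>x. T (h1 x))"
  and comp3_affine_in_x [simp]: "comp3 (affine_in_x A D) h1 h2 h3 = (\<lambda>x. A (h1 x) * h2 x + D (h1 x))"
  and comp3_affine_in_u [simp]: "comp3 (affine_in_u S Al) h1 h2 h3 = (\<lambda>x. S (h1 x) + Al (h1 x) * h3 x)"
  by (simp_all add: comp3_def)

text \<open>
  In each of the following lemmas two test functions are compared whose jets at \<open>(t, x)\<close>
  differ only in \<open>u\<^sub>x\<^sub>x\<^sub>x\<^sub>x\<^sub>t\<close>, \<open>u\<^sub>x\<^sub>x\<^sub>x\<^sub>x\<^sub>x\<close>, \<open>u\<^sub>x\<^sub>x\<^sub>x\<^sub>x\<close> or \<open>u\<^sub>x\<^sub>x\<^sub>x\<close> respectively, with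
  \<open>u\<^sub>t\<close> adjusted so that both solve (2) at \<open>(t, x)\<close>.
\<close>

lemma determining_equation_tau:
  assumes L: "lie_symmetry_eq2 B E F Q \<tau> \<xi> \<eta>"
    and sm: "smooth_fun \<tau>" "smooth_fun \<xi>" "smooth_fun \<eta>"
  shows "partial_x \<tau> (t, x, u) + m * partial_u \<tau> (t, x, u) = 0"
proof -
  define c where "c = - (E t * u * m + Q t * u)"
  define U where "U b = affine_in_t t (quintic x u m 0 0 0 0) (quintic x c 0 0 0 b 0)" for b
  have "eq2_prolonged B E F Q \<tau> \<xi> \<eta> (U b) (t, x) = 0" for b
    unfolding U_def
    by (rule lie_symmetry_eq2_at_affine_in_t[OF L]) (simp_all add: eq2_lhs_affine_in_t c_def)
  moreover have "eq2_prolonged B E F Q \<tau> \<xi> \<eta> (U (1/24)) (t, x)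
      - eq2_prolonged B E F Q \<tau> \<xi> \<eta> (U 0) (t, x)
      = - 5 * (partial_x \<tau> (t, x, u) + m * partial_u \<tau> (t, x, u))"
    unfolding U_def
    apply (simp only: eq2_prolonged_affine_in_t smooth_fun_quintic Let_def)
    apply (simp add: deriv_comp3 sm)
    apply (simp add: comp3_def algebra_simps)
    done
  ultimately show ?thesis
    by simp
qed

lemma determining_equation_xi:
  assumes L: "lie_symmetry_eq2 B E F Q (fun_of_t T) \<xi> \<eta>"
    and sm: "smooth_fun T" "smooth_fun \<xi>" "smooth_fun \<eta>"
  shows "deriv T t - 5 * partial_x \<xi> (t, x, u) - 5 * m * partial_u \<xi> (t, x, u) = 0"
proof -
  define c where "c = - (E t * u * m + Q t * u)"
  define U where "U b = affine_in_t t (quintic x u m 0 0 0 b) (quintic x (c - 120 * b) 0 0 0 0 0)"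
    for b
  have "eq2_prolonged B E F Q (fun_of_t T) \<xi> \<eta> (U b) (t, x) = 0" for b
    unfolding U_def
    by (rule lie_symmetry_eq2_at_affine_in_t[OF L]) (simp_all add: eq2_lhs_affine_in_t c_def)
  moreover have "eq2_prolonged B E F Q (fun_of_t T) \<xi> \<eta> (U (1/120)) (t, x)
      - eq2_prolonged B E F Q (fun_of_t T) \<xi> \<eta> (U 0) (t, x)
      = deriv T t - 5 * partial_x \<xi> (t, x, u) - 5 * m * partial_u \<xi> (t, x, u)"
    unfolding U_def
    apply (simp only: eq2_prolonged_affine_in_t smooth_fun_quintic Let_def)
    apply (simp add: deriv_comp3 sm)
    apply (simp add: comp3_def algebra_simps)
    done
  ultimately show ?thesis
    by simp
qed

lemma determining_equation_eta_second_order: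
  assumes L: "lie_symmetry_eq2 B E F Q (fun_of_t T) (affine_in_x A D) \<eta>"
    and sm: "smooth_fun T" "smooth_fun A" "smooth_fun D" "smooth_fun \<eta>"
  shows "partial_u (partial_x \<eta>) (t, x, u) + 4 * partial_x (partial_u \<eta>) (t, x, u)
         + 5 * m * partial_u (partial_u \<eta>) (t, x, u) = 0"
proof -
  define c where "c = - (E t * u * m + Q t * u)"
  define U where "U b = affine_in_t t (quintic x u m 0 0 b 0) (quintic x c 0 0 0 0 0)" for b
  have "eq2_prolonged B E F Q (fun_of_t T) (affine_in_x A D) \<eta> (U b) (t, x) = 0" for b
    unfolding U_def
    by (rule lie_symmetry_eq2_at_affine_in_t[OF L]) (simp_all add: eq2_lhs_affine_in_t c_def)
  moreover have "eq2_prolonged B E F Q (fun_of_t T) (affine_in_x A D) \<eta> (U (1/24)) (t, x)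
      - eq2_prolonged B E F Q (fun_of_t T) (affine_in_x A D) \<eta> (U 0) (t, x)
      = partial_u (partial_x \<eta>) (t, x, u) + 4 * partial_x (partial_u \<eta>) (t, x, u)
         + 5 * m * partial_u (partial_u \<eta>) (t, x, u)"
    unfolding U_def
    apply (simp only: eq2_prolonged_affine_in_t smooth_fun_quintic Let_def)
    apply (simp add: deriv_comp3 sm)
    apply (simp add: comp3_def algebra_simps)
    done
  ultimately show ?thesis
    by simp
qed

lemma determining_equation_eta:
  assumes L: "lie_symmetry_eq2 B E F Q (fun_of_t T) (affine_in_x A D) \<eta>"
    and sm: "smooth_fun T" "smooth_fun A" "smooth_fun D" "smooth_fun \<eta>"
    and \<eta>_xu: "partial_x (partial_u \<eta>) = (\<lambda>_. 0)" and \<eta>_uu: "partial_u (partial_u \<eta>) = (\<lambda>_. 0)"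
  shows "T t * deriv B t + \<eta> (t, x, u) + (B t + u) * (deriv T t - 3 * A t) = 0"
proof -
  define c where "c = - (Q t * u)"
  define U where "U b = affine_in_t t (quintic x u 0 0 b 0 0) (quintic x (c - 6 * b * (B t + u)) 0 0 0 0 0)"
    for b
  have "eq2_prolonged B E F Q (fun_of_t T) (affine_in_x A D) \<eta> (U b) (t, x) = 0" for b
    unfolding U_def
    by (rule lie_symmetry_eq2_at_affine_in_t[OF L])
      (simp_all add: eq2_lhs_affine_in_t c_def algebra_simps)
  moreover have "eq2_prolonged B E F Q (fun_of_t T) (affine_in_x A D) \<eta> (U (1/6)) (t, x)
      - eq2_prolonged B E F Q (fun_of_t T) (affine_in_x A D) \<eta> (U 0) (t, x)
      = T t * deriv B t + \<eta> (t, x, u) + (B t + u) * (deriv T t - 3 * A t)"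
    unfolding U_def
    apply (simp only: eq2_prolonged_affine_in_t smooth_fun_quintic Let_def)
    apply (simp add: deriv_comp3 sm)
    apply (simp add: partial_u_partial_x_commute partial_u_partial_t_commute
        partial_x_partial_t_commute sm \<eta>_xu \<eta>_uu)
    apply (simp add: comp3_def algebra_simps)
    done
  ultimately show ?thesis
    by simp
qed

section \<open>Symmetries in normal form\<close>

lemma differentiable_restrict_x: "smooth_fun f \<Longrightarrow> (\<lambda>y. f (t, y)) differentiable (at y)"
  by (rule differentiable_compose[where g = "\<lambda>y. (t, y)"], rule smooth_fun_differentiable)
    (auto intro!: derivative_intros)

lemma differentiable_restrict_t: "smooth_fun f \<Longrightarrow> (\<lambda>s. f (s, x)) differentiable (at s)"
  by (rule differentiable_compose[where g = "\<lambda>s. (s, x)"], rule smooth_fun_differentiable)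
    (auto intro!: derivative_intros)

lemma smooth_fun_restrict_x:
  fixes f :: "real \<times> real \<Rightarrow> real"
  assumes "smooth_fun f"
  shows "smooth_fun (\<lambda>y. f (t, y))"
proof (rule smooth_fun_realI)
  fix k y
  have "(deriv ^^ k) (\<lambda>y. f (t, y)) = (\<lambda>y. pxn k f (t, y))"
    by (simp add: pxn_eq_deriv_funpow)
  then show "(deriv ^^ k) (\<lambda>y. f (t, y)) differentiable (at y)"
    using differentiable_restrict_x[OF smooth_fun_pxn[OF assms]] by simp
qed

lemma eq2_prolonged_normal_form_on_solution:
  assumes U: "smooth_fun U"
    and sm: "smooth_fun T" "smooth_fun A" "smooth_fun D" "smooth_fun S" "smooth_fun Al"
    and solution: "eq2_lhs B E F Q U (t0, x0) = 0"
  shows "eq2_prolonged B E F Q (fun_of_t T) (affine_in_x A D) (affine_in_u S Al) U (t0, x0) =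
    (let \<Phi> = (\<lambda>y. U (t0, y)); u0 = \<Phi> x0; u1 = deriv \<Phi> x0; u2 = deriv (deriv \<Phi>) x0;
         u3 = deriv (deriv (deriv \<Phi>)) x0; u5 = deriv (deriv (deriv (deriv (deriv \<Phi>)))) x0 in
     (deriv T t0 - 5 * A t0) * u5 + (deriv T t0 + Al t0 - 3 * A t0) * (u0 * u3 + F * u1 * u2)
     + (T t0 * deriv B t0 + S t0 + (deriv T t0 - 3 * A t0) * B t0) * u3
     + (T t0 * deriv E t0 + (deriv T t0 + Al t0 - A t0) * E t0) * u0 * u1
     + (S t0 * E t0 - deriv A t0 * x0 - deriv D t0) * u1
     + (T t0 * deriv Q t0 + deriv T t0 * Q t0 + deriv Al t0) * u0 + S t0 * Q t0 + deriv S t0)"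
proof -
  have smooth_restrictions: "smooth_fun (\<lambda>y. U (t0, y))" "smooth_fun (\<lambda>y. pt U (t0, y))"
    using smooth_fun_restrict_x smooth_fun_pt U by blast+
  have differentiable_restrictions: "differentiable_everywhere (\<lambda>s. U (s, x0))"
      "differentiable_everywhere (\<lambda>s. pt U (s, x0))" "differentiable_everywhere (\<lambda>s. px U (s, x0))"
    unfolding differentiable_everywhere_def
    using differentiable_restrict_t U smooth_fun_pt smooth_fun_px by blast+
  have ptpx: "pt (px U) (t0, x0) = deriv (\<lambda>y. pt U (t0, y)) x0"
    using pt_px_commute[OF U] by (simp add: px_eq_deriv)
  have ut: "pt U (t0, x0) = - (deriv (deriv (deriv (deriv (deriv (\<lambda>y. U (t0, y)))))) x0
     + (B t0 + U (t0, x0)) * deriv (deriv (deriv (\<lambda>y. U (t0, y)))) x0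
     + E t0 * U (t0, x0) * deriv (\<lambda>y. U (t0, y)) x0
     + F * deriv (\<lambda>y. U (t0, y)) x0 * deriv (deriv (\<lambda>y. U (t0, y))) x0 + Q t0 * U (t0, x0))"
    using solution unfolding eq2_lhs_def Let_def
    by (simp add: pxn_eq_deriv_funpow funpow_deriv_numeral px_eq_deriv algebra_simps)
  show ?thesis
    apply (simp only: eq2_prolonged_expand[OF U] Let_def)
    apply (simp add: sm smooth_restrictions differentiable_restrictions)
    apply (simp add: pt_eq_deriv[symmetric] ptpx)
    apply (simp add: ut px_eq_deriv algebra_simps)
    done
qed

lemma determining_equations_normal_form:
  assumes L: "lie_symmetry_eq2 B E F Q (fun_of_t T) (affine_in_x A D) (affine_in_u S Al)"
    and sm: "smooth_fun T" "smooth_fun A" "smooth_fun D" "smooth_fun S" "smooth_fun Al"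
  shows "(T t * deriv E t + (deriv T t + Al t - A t) * E t) * u * m
         + (S t * E t - deriv A t * x - deriv D t) * m
         + (T t * deriv Q t + deriv T t * Q t + deriv Al t) * u + S t * Q t + deriv S t = 0"
proof -
  define U where "U = affine_in_t t (quintic x u m 0 0 0 0) (quintic x (- (E t * u * m + Q t * u)) 0 0 0 0 0)"
  have smooth: "smooth_fun U" and solution: "eq2_lhs B E F Q U (t, x) = 0"
    unfolding U_def by (simp_all add: smooth_fun_affine_in_t eq2_lhs_affine_in_t)
  have "eq2_prolonged B E F Q (fun_of_t T) (affine_in_x A D) (affine_in_u S Al) U (t, x) = 0"
    using L smooth solution unfolding lie_symmetry_eq2_def by blast
  then show ?thesis
    using eq2_prolonged_normal_form_on_solution[OF smooth sm solution]
    by (simp add: U_def Let_def)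
qed

lemma lie_symmetry_eq2_tau:
  assumes L: "lie_symmetry_eq2 B E F Q \<tau> \<xi> \<eta>"
    and sm: "smooth_fun \<tau>" "smooth_fun \<xi>" "smooth_fun \<eta>"
  shows "\<tau> = fun_of_t (\<lambda>t. \<tau> (t, 0, 0))"
proof
  fix q :: "real \<times> real \<times> real"
  obtain t x u where q: "q = (t, x, u)"
    by (cases q) auto
  have "\<tau> (t, x, u) = 0 * x + \<tau> (t, 0, 0)"
    using determining_equation_tau[OF L sm, where m = 0] determining_equation_tau[OF L sm, where m = 1]
    by (intro affine_in_x_if_partials[OF sm(1), where a = "\<lambda>_. 0"]) simp_all
  then show "\<tau> q = fun_of_t (\<lambda>t. \<tau> (t, 0, 0)) q"
    unfolding q by simp
qed

lemma lie_symmetry_eq2_xi: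
  assumes L: "lie_symmetry_eq2 B E F Q (fun_of_t T) \<xi> \<eta>"
    and sm: "smooth_fun T" "smooth_fun \<xi>" "smooth_fun \<eta>"
  shows "\<xi> = affine_in_x (\<lambda>t. deriv T t / 5) (\<lambda>t. \<xi> (t, 0, 0))"
proof
  fix q :: "real \<times> real \<times> real"
  obtain t x u where q: "q = (t, x, u)"
    by (cases q) auto
  have "\<xi> (t, x, u) = deriv T t / 5 * x + \<xi> (t, 0, 0)"
    using determining_equation_xi[OF L sm, where m = 0] determining_equation_xi[OF L sm, where m = 1]
    by (intro affine_in_x_if_partials[OF sm(2)]) (simp_all add: field_simps)
  then show "\<xi> q = affine_in_x (\<lambda>t. deriv T t / 5) (\<lambda>t. \<xi> (t, 0, 0)) q"
    unfolding q by simp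
qed

lemma lie_symmetry_eq2_eta:
  assumes L: "lie_symmetry_eq2 B E F Q (fun_of_t T) (affine_in_x (\<lambda>t. deriv T t / 5) D) \<eta>"
    and sm: "smooth_fun T" "smooth_fun D" "smooth_fun \<eta>"
  shows "\<eta> (t, x, u) = - (T t * deriv B t) - 2 / 5 * deriv T t * (B t + u)"
proof -
  have A: "smooth_fun (\<lambda>t. deriv T t / 5)"
    using smooth_fun_cmult[of "deriv T" "1/5"] sm(1) by simp
  note second_order = determining_equation_eta_second_order[OF L sm(1) A sm(2,3)]
  have "partial_x (partial_u \<eta>) = (\<lambda>_. 0)"
    using second_order[where m = 0] partial_u_partial_x_commute[OF sm(3)] by fastforce
  moreover have "partial_u (partial_u \<eta>) = (\<lambda>_. 0)"
    using second_order[where m = 1] partial_u_partial_x_commute[OF sm(3)] calculation by fastforce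
  ultimately show ?thesis
    using determining_equation_eta[OF L sm(1) A sm(2,3), of t x u] by (simp add: algebra_simps)
qed

lemma lie_symmetry_eq2_normal_form:
  assumes L: "lie_symmetry_eq2 B E F Q \<tau> \<xi> \<eta>"
    and sm: "smooth_fun \<tau>" "smooth_fun \<xi>" "smooth_fun \<eta>"
  obtains T D S where "smooth_fun T" "smooth_fun D" "smooth_fun S"
    "\<tau> = fun_of_t T" "\<xi> = affine_in_x (\<lambda>t. deriv T t / 5) D"
    "\<eta> = affine_in_u S (\<lambda>t. - 2 / 5 * deriv T t)"
    "\<And>t. S t = - (T t * deriv B t) - 2 / 5 * deriv T t * B t"
proof
  define T where "T = (\<lambda>t. \<tau> (t, 0, 0))"
  define D where "D = (\<lambda>t. \<xi> (t, 0, 0))"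
  define S where "S = (\<lambda>t. \<eta> (t, 0, 0))"
  show T: "smooth_fun T" and D: "smooth_fun D" and "smooth_fun S"
    unfolding T_def D_def S_def using sm by (simp_all add: smooth_fun_restrict_t)
  show \<tau>: "\<tau> = fun_of_t T"
    unfolding T_def using lie_symmetry_eq2_tau[OF L sm] .
  show \<xi>: "\<xi> = affine_in_x (\<lambda>t. deriv T t / 5) D"
    unfolding D_def using lie_symmetry_eq2_xi[OF L[unfolded \<tau>] T sm(2,3)] .
  note \<eta>_eq = lie_symmetry_eq2_eta[OF L[unfolded \<tau> \<xi>] T D sm(3)]
  show S: "S t = - (T t * deriv B t) - 2 / 5 * deriv T t * B t" for t
    unfolding S_def using \<eta>_eq[of t 0 0] by simp
  show "\<eta> = affine_in_u S (\<lambda>t. - 2 / 5 * deriv T t)"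
  proof
    fix q :: "real \<times> real \<times> real"
    obtain t x u where q: "q = (t, x, u)"
      by (cases q) auto
    have "\<eta> q = - (T t * deriv B t) - 2 / 5 * deriv T t * (B t + u)"
      unfolding q by (rule \<eta>_eq)
    also have "\<dots> = S t + - 2 / 5 * deriv T t * u"
      unfolding S[of t] by (simp add: algebra_simps)
    finally show "\<eta> q = affine_in_u S (\<lambda>t. - 2 / 5 * deriv T t) q"
      unfolding q by simp
  qed
qed

lemma normal_form_symmetry_conditions:
  assumes L: "lie_symmetry_eq2 B E F Q (fun_of_t T) (affine_in_x (\<lambda>t. deriv T t / 5) D)
      (affine_in_u S (\<lambda>t. - 2 / 5 * deriv T t))"
    and sm: "smooth_fun T" "smooth_fun D" "smooth_fun S"
  shows "deriv (deriv T) t = 0" and "S t * E t - deriv D t = 0" and "S t * Q t + deriv S t = 0"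
    and "T t * deriv Q t + deriv T t * Q t = 0" and "T t * deriv E t + 2 / 5 * deriv T t * E t = 0"
proof -
  have A: "smooth_fun (\<lambda>t. deriv T t / 5)" and Al: "smooth_fun (\<lambda>t. - 2 / 5 * deriv T t)"
    using smooth_fun_cmult[of "deriv T" "1/5"] smooth_fun_cmult[of "deriv T" "- 2 / 5"] sm(1)
    by simp_all
  have "deriv (\<lambda>t. c * deriv T t) t = c * deriv (deriv T) t" for c
    using sm(1) by (simp add: DERIV_imp_deriv DERIV_cmult differentiable_everywhere_DERIV)
  from this[of "1/5"] this[of "- 2 / 5"]
  have D0: "(T t * deriv E t + 2 / 5 * deriv T t * E t) * u * m
       + (S t * E t - deriv (deriv T) t / 5 * x - deriv D t) * m
       + (T t * deriv Q t + deriv T t * Q t - 2 / 5 * deriv (deriv T) t) * u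
       + S t * Q t + deriv S t = 0" for x u m
    using determining_equations_normal_form[OF L sm(1) A sm(2,3) Al, of t u m x]
    by (simp add: algebra_simps)
  show SQ: "S t * Q t + deriv S t = 0"
    using D0[where x = 0 and u = 0 and m = 0] by simp
  have SE: "S t * E t - deriv (deriv T) t / 5 * x - deriv D t = 0" for x
    using D0[where x = x and u = 0 and m = 1] SQ by simp
  show T'': "deriv (deriv T) t = 0"
    using SE[of 0] SE[of 1] by simp
  show "S t * E t - deriv D t = 0"
    using SE[of 0] by simp
  show TQ: "T t * deriv Q t + deriv T t * Q t = 0"
    using D0[where x = 0 and u = 1 and m = 0] SQ T'' by simp
  show "T t * deriv E t + 2 / 5 * deriv T t * E t = 0"
    using D0[where x = 0 and u = 1 and m = 1] SQ TQ SE[of 0] T'' by simp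
qed

definition symmetry_normal_form ::
  "(real \<Rightarrow> real) \<Rightarrow> (real \<Rightarrow> real) \<Rightarrow> (real \<Rightarrow> real) \<Rightarrow> (real \<times> real \<times> real \<Rightarrow> real)
   \<Rightarrow> (real \<times> real \<times> real \<Rightarrow> real) \<Rightarrow> (real \<times> real \<times> real \<Rightarrow> real) \<Rightarrow> bool" where
  "symmetry_normal_form B E Q \<tau> \<xi> \<eta> \<longleftrightarrow>
    (\<exists>k2 k3 :: real. \<exists>\<delta> \<sigma> :: real \<Rightarrow> real.
         smooth_fun \<delta> \<and> smooth_fun \<sigma> \<and>
         (\<forall>t x u. \<tau> (t, x, u) = k2 * t + k3
                \<and> \<xi> (t, x, u) = k2 / 5 * x + \<delta> t
                \<and> \<eta> (t, x, u) = \<sigma> t - 2 * k2 / 5 * u) \<and>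
         (\<forall>t. 5 * (k2 * t + k3) * deriv B t + 2 * k2 * B t + 5 * \<sigma> t = 0
            \<and> (k2 * t + k3) * deriv E t + 2 * k2 / 5 * E t = 0
            \<and> \<sigma> t * E t - deriv \<delta> t = 0
            \<and> \<sigma> t * Q t + deriv \<sigma> t = 0
            \<and> (k2 * t + k3) * deriv Q t + k2 * Q t = 0))"

lemma lie_symmetry_eq2_imp_symmetry_normal_form:
  assumes L: "lie_symmetry_eq2 B E F Q \<tau> \<xi> \<eta>"
    and sm: "smooth_fun \<tau>" "smooth_fun \<xi>" "smooth_fun \<eta>"
  shows "symmetry_normal_form B E Q \<tau> \<xi> \<eta>"
proof -
  obtain T D S where sm': "smooth_fun T" "smooth_fun D" "smooth_fun S"
    and fields: "\<tau> = fun_of_t T" "\<xi> = affine_in_x (\<lambda>t. deriv T t / 5) D"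
      "\<eta> = affine_in_u S (\<lambda>t. - 2 / 5 * deriv T t)"
    and S: "\<And>t. S t = - (T t * deriv B t) - 2 / 5 * deriv T t * B t"
    using lie_symmetry_eq2_normal_form[OF L sm] by blast
  note conditions = normal_form_symmetry_conditions[OF L[unfolded fields] sm']
  define k2 where "k2 = deriv T 0"
  have "(deriv T has_real_derivative 0) (at t)" for t
    using differentiable_everywhere_DERIV[of "deriv T" t] sm'(1) conditions(1)[of t] by simp
  then have T': "deriv T t = k2" for t
    unfolding k2_def by (rule deriv_zero_imp_const)
  have T_minus_linear: "((\<lambda>t. T t - k2 * t) has_real_derivative 0) (at t)" for t
    using differentiable_everywhere_DERIV[of T t] sm'(1) T'[of t]
    by (auto intro!: derivative_eq_intros)
  define k3 where "k3 = T 0"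
  have T: "T t = k2 * t + k3" for t
    using deriv_zero_imp_const[of "\<lambda>t. T t - k2 * t" t] T_minus_linear unfolding k3_def by simp
  show ?thesis
    using sm' conditions(2-5) unfolding fields symmetry_normal_form_def
    by (intro exI[of _ k2] exI[of _ k3] exI[of _ D] exI[of _ S])
      (auto simp: T T' S algebra_simps)
qed

lemma symmetry_normal_form_imp_lie_symmetry_eq2:
  assumes "symmetry_normal_form B E Q \<tau> \<xi> \<eta>"
  shows "lie_symmetry_eq2 B E F Q \<tau> \<xi> \<eta>"
  unfolding lie_symmetry_eq2_def
proof (intro allI impI)
  fix U :: "real \<times> real \<Rightarrow> real" and p :: "real \<times> real"
  assume U: "smooth_fun U" and solution: "eq2_lhs B E F Q U p = 0"
  obtain k2 k3 \<delta> \<sigma> where sm: "smooth_fun \<delta>" "smooth_fun \<sigma>"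
    and fields: "\<forall>t x u. \<tau> (t, x, u) = k2 * t + k3 \<and> \<xi> (t, x, u) = k2 / 5 * x + \<delta> t
              \<and> \<eta> (t, x, u) = \<sigma> t - 2 * k2 / 5 * u"
    and conditions: "\<forall>t. 5 * (k2 * t + k3) * deriv B t + 2 * k2 * B t + 5 * \<sigma> t = 0
          \<and> (k2 * t + k3) * deriv E t + 2 * k2 / 5 * E t = 0
          \<and> \<sigma> t * E t - deriv \<delta> t = 0
          \<and> \<sigma> t * Q t + deriv \<sigma> t = 0
          \<and> (k2 * t + k3) * deriv Q t + k2 * Q t = 0"
    using assms unfolding symmetry_normal_form_def by blast
  obtain t0 x0 where p: "p = (t0, x0)"
    by fastforce
  have "\<tau> = fun_of_t (\<lambda>t. k2 * t + k3)" "\<xi> = affine_in_x (\<lambda>_. k2 / 5) \<delta>"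
    "\<eta> = affine_in_u \<sigma> (\<lambda>_. - 2 * k2 / 5)"
    using fields by (auto simp: fun_of_t_def affine_in_x_def affine_in_u_def)
  moreover have "(\<lambda>t. k2 * t + k3) = quintic 0 k3 k2 0 0 0 0"
    by (auto simp: quintic_def)
  moreover have "deriv (\<lambda>t. k2 * t + k3) t0 = k2"
    by (auto intro!: DERIV_imp_deriv derivative_eq_intros)
  ultimately have "eq2_prolonged B E F Q \<tau> \<xi> \<eta> U (t0, x0) =
      (5 * (k2 * t0 + k3) * deriv B t0 + 2 * k2 * B t0 + 5 * \<sigma> t0) / 5
        * deriv (deriv (deriv (\<lambda>y. U (t0, y)))) x0
      + ((k2 * t0 + k3) * deriv E t0 + 2 * k2 / 5 * E t0) * U (t0, x0) * deriv (\<lambda>y. U (t0, y)) x0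
      + (\<sigma> t0 * E t0 - deriv \<delta> t0) * deriv (\<lambda>y. U (t0, y)) x0
      + ((k2 * t0 + k3) * deriv Q t0 + k2 * Q t0) * U (t0, x0) + (\<sigma> t0 * Q t0 + deriv \<sigma> t0)"
    using eq2_prolonged_normal_form_on_solution[OF U _ _ sm, of "\<lambda>t. k2 * t + k3" "\<lambda>_. k2 / 5"
        "\<lambda>_. - 2 * k2 / 5" B E F Q t0 x0] solution p
    by (simp add: Let_def algebra_simps)
  also have "\<dots> = 0"
    using conditions[rule_format, of t0] by (simp only:)
  finally show "eq2_prolonged B E F Q \<tau> \<xi> \<eta> U p = 0"
    using p by simp
qed

theorem mainTheorem5:
  fixes B E Q :: "real \<Rightarrow> real" and F :: real
    and \<tau> \<xi> \<eta> :: "real \<times> real \<times> real \<Rightarrow> real"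
  assumes "F \<noteq> 0"
    and "smooth_fun B" and "smooth_fun E" and "smooth_fun Q"
    and "smooth_fun \<tau>" and "smooth_fun \<xi>" and "smooth_fun \<eta>"
  shows "lie_symmetry_eq2 B E F Q \<tau> \<xi> \<eta> \<longleftrightarrow>
    (\<exists>k2 k3 :: real. \<exists>\<delta> \<sigma> :: real \<Rightarrow> real.
       smooth_fun \<delta> \<and> smooth_fun \<sigma> \<and>
       (\<forall>t x u. \<tau> (t, x, u) = k2 * t + k3
              \<and> \<xi> (t, x, u) = k2 / 5 * x + \<delta> t
              \<and> \<eta> (t, x, u) = \<sigma> t - 2 * k2 / 5 * u) \<and>
       (\<forall>t. 5 * (k2 * t + k3) * deriv B t + 2 * k2 * B t + 5 * \<sigma> t = 0
          \<and> (k2 * t + k3) * deriv E t + 2 * k2 / 5 * E t = 0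
          \<and> \<sigma> t * E t - deriv \<delta> t = 0
          \<and> \<sigma> t * Q t + deriv \<sigma> t = 0
          \<and> (k2 * t + k3) * deriv Q t + k2 * Q t = 0))"
proof -
  have "lie_symmetry_eq2 B E F Q \<tau> \<xi> \<eta> \<longleftrightarrow> symmetry_normal_form B E Q \<tau> \<xi> \<eta>"
    using lie_symmetry_eq2_imp_symmetry_normal_form[OF _ assms(5-7)]
      symmetry_normal_form_imp_lie_symmetry_eq2 by blast
  then show ?thesis
    unfolding symmetry_normal_form_def .
qed

end
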